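(* Let $(\Omega(\mathcal{A}),\mathrm{d},\bar{\mathrm{d}})$ be a bidifferential graded algebra and $M,N\ge1$. Let $P$ be an $N\times N$ matrix over $\mathcal{A}$, let $K$ be an $N\times M$ matrix over $\mathcal{A}$ with $\mathrm{d}K=\bar{\mathrm{d}}K=0$, and let $X'$ ($N\times N$) and $Y'$ ($M\times N$) be matrices over $\mathcal{A}$ with $$\bar{\mathrm{d}}X'=(\mathrm{d}X')P,\qquad \bar{\mathrm{d}}Y'=(\mathrm{d}Y')P .$$ (a) Let $R$ ($N\times N$) and $L$ ($M\times M$) be matrices over $\mathcal{A}$ with $\mathrm{d}R=\mathrm{d}L=0$, and suppose $L\,Y'=Y'\,P$ and $R\,X'=X'\,P$. If $X'-KY'$ is invertible, then $\Phi=Y'(X'-KY')^{-1}$ satisfies $\bar{\mathrm{d}}\,\mathrm{d}\,\Phi=(\mathrm{d}\Phi)\,Q\,(\mathrm{d}\Phi)$ with $Q=RK-KL$. (b) Suppose $M=N$, let $L$ be an $N\times N$ matrix over $\mathcal{A}$ with $\mathrm{d}L=0$, and suppose $L\,Y'=Y'\,P$ and $L\,X'+Y'=X'\,P$. If $X'-KY'$ is invertible, then $\Phi=Y'(X'-KY')^{-1}$ satisfies $\bar{\mathrm{d}}\,\mathrm{d}\,\Phi=(\mathrm{d}\Phi)\,Q\,(\mathrm{d}\Phi)$ with $Q=I+[L,K]=I+LK-KL$.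
   Context: $\mathcal{A}$ is a unital associative algebra over $\mathbb{C}$ with identity $I$. A bidifferential graded algebra $(\Omega(\mathcal{A}),\mathrm{d},\bar{\mathrm{d}})$ consists of a graded associative algebra $\Omega(\mathcal{A})=\bigoplus_{r\ge 0}\Omega^r(\mathcal{A})$ with $\Omega^0(\mathcal{A})=\mathcal{A}$ (each $\Omega^r(\mathcal{A})$ an $\mathcal{A}$-bimodule) together with two linear maps $\mathrm{d},\bar{\mathrm{d}}:\Omega^r(\mathcal{A})\to\Omega^{r+1}(\mathcal{A})$ satisfying the graded Leibniz rule $\mathrm{d}(\alpha\beta)=(\mathrm{d}\alpha)\beta+(-1)^r\alpha\,\mathrm{d}\beta$ for $\alpha\in\Omega^r(\mathcal{A})$ (and likewise for $\bar{\mathrm{d}}$), and $\mathrm{d}^2=\bar{\mathrm{d}}^2=0$, $\mathrm{d}\bar{\mathrm{d}}+\bar{\mathrm{d}}\mathrm{d}=0$. The maps $\mathrm{d},\bar{\mathrm{d}}$ are applied entrywise to matrices with entries in $\Omega(\mathcal{A})$, and products of such matrices use the matrix product together with the product of $\Omega(\mathcal{A})$. In (b), $I$ denotes the $N\times N$ identity matrix. *)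

theory Defs
  imports Complex_Main "Jordan_Normal_Form.Matrix"
begin

text \<open>The degree-0 part Om 0 is
the algebra A.\<close>

definition complex_algebra_sc :: "(complex \<Rightarrow> 'w::ring_1 \<Rightarrow> 'w) \<Rightarrow> bool" where
  "complex_algebra_sc sc \<longleftrightarrow>
     (\<forall>a x y. sc a (x + y) = sc a x + sc a y) \<and>
     (\<forall>a b x. sc (a + b) x = sc a x + sc b x) \<and>
     (\<forall>a b x. sc a (sc b x) = sc (a * b) x) \<and>
     (\<forall>x. sc 1 x = x) \<and>
     (\<forall>a x y. sc a x * y = sc a (x * y)) \<and>
     (\<forall>a x y. x * sc a y = sc a (x * y))"

definition graded_algebra ::
  "(complex \<Rightarrow> 'w::ring_1 \<Rightarrow> 'w) \<Rightarrow> (nat \<Rightarrow> 'w set) \<Rightarrow> bool" where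
  "graded_algebra sc Om \<longleftrightarrow>
     complex_algebra_sc sc \<and>
     (\<forall>r. 0 \<in> Om r \<and> (\<forall>x\<in>Om r. \<forall>y\<in>Om r. x + y \<in> Om r) \<and>
          (\<forall>a. \<forall>x\<in>Om r. sc a x \<in> Om r)) \<and>
     (\<forall>r s. \<forall>x\<in>Om r. \<forall>y\<in>Om s. x * y \<in> Om (r + s)) \<and>
     1 \<in> Om 0 \<and>
     (\<forall>w. \<exists>!c :: nat \<Rightarrow> 'w. finite {r. c r \<noteq> 0} \<and> (\<forall>r. c r \<in> Om r) \<and>
            w = (\<Sum>r\<in>{r. c r \<noteq> 0}. c r))"

definition graded_derivation ::
  "(complex \<Rightarrow> 'w::ring_1 \<Rightarrow> 'w) \<Rightarrow> (nat \<Rightarrow> 'w set) \<Rightarrow> ('w \<Rightarrow> 'w) \<Rightarrow> bool" where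
  "graded_derivation sc Om d \<longleftrightarrow>
     (\<forall>x y. d (x + y) = d x + d y) \<and>
     (\<forall>a x. d (sc a x) = sc a (d x)) \<and>
     (\<forall>r. \<forall>x\<in>Om r. d x \<in> Om (Suc r)) \<and>
     (\<forall>r. \<forall>x\<in>Om r. \<forall>y. d (x * y) = d x * y + (-1) ^ r * x * d y)"

definition bidiff_graded_algebra ::
  "(complex \<Rightarrow> 'w::ring_1 \<Rightarrow> 'w) \<Rightarrow> (nat \<Rightarrow> 'w set) \<Rightarrow> ('w \<Rightarrow> 'w) \<Rightarrow> ('w \<Rightarrow> 'w) \<Rightarrow> bool" where
  "bidiff_graded_algebra sc Om d db \<longleftrightarrow>
     graded_algebra sc Om \<and> graded_derivation sc Om d \<and> graded_derivation sc Om db \<and>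
     (\<forall>x. d (d x) = 0) \<and> (\<forall>x. db (db x) = 0) \<and> (\<forall>x. d (db x) + db (d x) = 0)"

definition mat_over :: "'w set \<Rightarrow> nat \<Rightarrow> nat \<Rightarrow> 'w mat set" where
  "mat_over S m n = {A. A \<in> carrier_mat m n \<and> (\<forall>i<m. \<forall>j<n. A $$ (i, j) \<in> S)}"

end

theory Submission
  imports Defs
begin

(*
  Write Z = X' - K Y' (invertible with inverse B)
  and Phi = Y' B.  The hypotheses db X' = (d X') P, db Y' = (d Y') P and d K = db K = 0 give
  db Z = (d Z) P, and from d(Z B) = 0 one gets d B = - B (d Z) B; together these yield the
  linear flow  db Phi = (d Phi) C  with  C = Z P B.  Applying d and using d^2 = 0 and
  d db = - db d turns this into  db d Phi = (d Phi)(d C).  Finally the algebraic relations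
  L Y' = Y' P and X' P = G X' + H Y' (with d-constant G, H, L) give C = G + Q Phi with the
  d-constant matrix Q = G K + H - K L, so d C = Q d Phi, which is the claimed identity
  db d Phi = (d Phi) Q (d Phi).  Part (a) of the corollary is the case G = R, H = 0 and
  part (b) the case G = L, H = I.
*)

text \<open>An additive map of degree +1 obeying the graded Leibniz rule; this is all of a graded
  derivation that the argument uses.\<close>

locale graded_leibniz =
  fixes Om :: "nat \<Rightarrow> 'w::ring_1 set" and d :: "'w \<Rightarrow> 'w"
  assumes d_add: "d (x + y) = d x + d y"
    and d_degree: "x \<in> Om r \<Longrightarrow> d x \<in> Om (Suc r)"
    and d_leibniz: "x \<in> Om r \<Longrightarrow> d (x * y) = d x * y + (-1) ^ r * x * d y"
begin

lemma d_zero: "d 0 = 0"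
  using d_add[of 0 0] by simp

lemma d_uminus: "d (- x) = - d x"
  using d_add[of x "- x"] d_zero minus_unique[of "d x" "d (- x)"] by simp

lemma d_diff: "d (x - y) = d x - d y"
  using d_add[of x "- y"] d_uminus by simp

lemma d_sum: "d (sum f S) = (\<Sum>i\<in>S. d (f i))"
  by (induction S rule: infinite_finite_induct) (auto simp: d_zero d_add)

lemma d_one: "1 \<in> Om 0 \<Longrightarrow> d 1 = 0"
  using d_leibniz[of 1 0 1] by simp

lemma mat_d_add:
  "A \<in> carrier_mat n m \<Longrightarrow> B \<in> carrier_mat n m \<Longrightarrow> map_mat d (A + B) = map_mat d A + map_mat d B"
  by (intro eq_matI) (auto simp: d_add)

lemma mat_d_diff:
  "A \<in> carrier_mat n m \<Longrightarrow> B \<in> carrier_mat n m \<Longrightarrow> map_mat d (A - B) = map_mat d A - map_mat d B"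
  by (intro eq_matI) (auto simp: d_diff)

lemma mat_d_zero: "map_mat d (0\<^sub>m n m) = 0\<^sub>m n m"
  by (intro eq_matI) (auto simp: d_zero)

lemma mat_d_one: "1 \<in> Om 0 \<Longrightarrow> map_mat d (1\<^sub>m n) = 0\<^sub>m n n"
  by (intro eq_matI) (auto simp: d_zero d_one)

lemma mat_d_degree: "A \<in> mat_over (Om r) n m \<Longrightarrow> map_mat d A \<in> mat_over (Om (Suc r)) n m"
  by (auto simp: mat_over_def d_degree)

lemma mat_leibniz:
  assumes A: "A \<in> mat_over (Om r) n m" and B: "B \<in> carrier_mat m k"
  shows "map_mat d (A * B) = map_mat d A * B + (-1) ^ r \<cdot>\<^sub>m (A * map_mat d B)"
proof (rule eq_matI)
  have Ac: "A \<in> carrier_mat n m" and Aij: "\<And>i l. i < n \<Longrightarrow> l < m \<Longrightarrow> A $$ (i, l) \<in> Om r"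
    using A unfolding mat_over_def by auto
  fix i j assume "i < dim_row (map_mat d A * B + (-1) ^ r \<cdot>\<^sub>m (A * map_mat d B))"
    and "j < dim_col (map_mat d A * B + (-1) ^ r \<cdot>\<^sub>m (A * map_mat d B))"
  then have i: "i < n" and j: "j < k" using Ac B by auto
  have "map_mat d (A * B) $$ (i, j) = d (\<Sum>l<m. A $$ (i, l) * B $$ (l, j))"
    using i j Ac B by (simp add: scalar_prod_def atLeast0LessThan)
  also have "\<dots> = (\<Sum>l<m. d (A $$ (i, l)) * B $$ (l, j) + (-1) ^ r * A $$ (i, l) * d (B $$ (l, j)))"
    by (simp add: d_sum d_leibniz[OF Aij[OF i]])
  also have "\<dots> = (map_mat d A * B + (-1) ^ r \<cdot>\<^sub>m (A * map_mat d B)) $$ (i, j)"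
    using i j Ac B
    by (simp add: scalar_prod_def atLeast0LessThan sum.distrib sum_distrib_left mult.assoc)
  finally show "map_mat d (A * B) $$ (i, j) = (map_mat d A * B + (-1) ^ r \<cdot>\<^sub>m (A * map_mat d B)) $$ (i, j)" .
qed (use A B in \<open>auto simp: mat_over_def\<close>)

lemma mat_leibniz0:
  assumes A: "A \<in> mat_over (Om 0) n m" and B: "B \<in> carrier_mat m k"
  shows "map_mat d (A * B) = map_mat d A * B + A * map_mat d B"
  unfolding mat_leibniz[OF A B] using A B by (intro eq_matI) (auto simp: mat_over_def)

lemma mat_leibniz1:
  assumes A: "A \<in> mat_over (Om 1) n m" and B: "B \<in> carrier_mat m k"
  shows "map_mat d (A * B) = map_mat d A * B - A * map_mat d B"
  unfolding mat_leibniz[OF A B] using A B by (intro eq_matI) (auto simp: mat_over_def)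

lemma mat_d_const_left:
  assumes A: "A \<in> mat_over (Om 0) n m" and dA: "map_mat d A = 0\<^sub>m n m" and B: "B \<in> carrier_mat m k"
  shows "map_mat d (A * B) = A * map_mat d B"
proof -
  have "A * map_mat d B \<in> carrier_mat n k"
    using A B by (auto simp: mat_over_def)
  then show ?thesis
    using mat_leibniz0[OF A B] dA B by simp
qed

lemma mat_d_inverse:
  assumes one: "1 \<in> Om 0" and Z: "Z \<in> mat_over (Om 0) n n" and B: "B \<in> carrier_mat n n"
    and ZB: "Z * B = 1\<^sub>m n" and BZ: "B * Z = 1\<^sub>m n"
  shows "map_mat d B = - (B * (map_mat d Z * B))"
proof -
  have Zc: "Z \<in> carrier_mat n n" using Z by (simp add: mat_over_def)
  have "map_mat d Z * B + Z * map_mat d B = 0\<^sub>m n n"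
    using mat_leibniz0[OF Z B] ZB mat_d_one[OF one] by simp
  then have "B * (map_mat d Z * B + Z * map_mat d B) = 0\<^sub>m n n"
    using B by simp
  then have "B * (map_mat d Z * B) + B * (Z * map_mat d B) = 0\<^sub>m n n"
    using B Zc by (subst (asm) mult_add_distrib_mat[of B n n]) auto
  moreover have "B * (Z * map_mat d B) = map_mat d B"
    using B Zc BZ assoc_mult_mat[of B n n Z n "map_mat d B" n] by simp
  ultimately have sum0: "B * (map_mat d Z * B) + map_mat d B = 0\<^sub>m n n"
    by simp
  show ?thesis
  proof (rule eq_matI)
    fix i j assume "i < dim_row (- (B * (map_mat d Z * B)))" "j < dim_col (- (B * (map_mat d Z * B)))"
    then have ij: "i < n" "j < n" using B by auto
    from arg_cong[OF sum0, of "\<lambda>A. A $$ (i, j)"]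
    have "(B * (map_mat d Z * B)) $$ (i, j) + map_mat d B $$ (i, j) = 0"
      using ij B Zc by simp
    then show "map_mat d B $$ (i, j) = (- (B * (map_mat d Z * B))) $$ (i, j)"
      using ij B Zc by (simp add: minus_unique)
  qed (use B in auto)
qed

lemma mat_d_right_quotient:
  assumes one: "1 \<in> Om 0" and Z: "Z \<in> mat_over (Om 0) n n" and B: "B \<in> carrier_mat n n"
    and ZB: "Z * B = 1\<^sub>m n" and BZ: "B * Z = 1\<^sub>m n" and Y: "Y \<in> mat_over (Om 0) m n"
  shows "map_mat d (Y * B) = (map_mat d Y - (Y * B) * map_mat d Z) * B"
proof -
  have Zc: "Z \<in> carrier_mat n n" and Yc: "Y \<in> carrier_mat m n"
    using Z Y by (auto simp: mat_over_def)
  have assoc: "Y * (B * (map_mat d Z * B)) = (Y * B * map_mat d Z) * B"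
    using Yc B Zc by (simp add: assoc_mult_mat[of Y m n "B * map_mat d Z" n B n]
        assoc_mult_mat[of B n n "map_mat d Z" n B n])
  have "map_mat d (Y * B) = map_mat d Y * B + Y * (- (B * (map_mat d Z * B)))"
    by (simp add: mat_leibniz0[OF Y B] mat_d_inverse[OF one Z B ZB BZ])
  also have "\<dots> = map_mat d Y * B - (Y * B * map_mat d Z) * B"
    using Yc B Zc unfolding assoc[symmetric] by (subst minus_add_uminus_mat[of _ m n]) auto
  also have "\<dots> = (map_mat d Y - (Y * B) * map_mat d Z) * B"
    using Yc B Zc by (simp add: minus_mult_distrib_mat[of _ m n])
  finally show ?thesis .
qed

end

locale graded_alg =
  fixes sc :: "complex \<Rightarrow> 'w::ring_1 \<Rightarrow> 'w" and Om :: "nat \<Rightarrow> 'w set"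
  assumes graded: "graded_algebra sc Om"
begin

lemma zero_mem: "0 \<in> Om r"
  and add_mem: "x \<in> Om r \<Longrightarrow> y \<in> Om r \<Longrightarrow> x + y \<in> Om r"
  and scale_mem: "x \<in> Om r \<Longrightarrow> sc a x \<in> Om r"
  and mult_mem: "x \<in> Om r \<Longrightarrow> y \<in> Om s \<Longrightarrow> x * y \<in> Om (r + s)"
  and one_mem: "1 \<in> Om 0"
  using graded unfolding graded_algebra_def by blast+

text \<open>Negation is the scalar multiplication by -1, so each component is an additive subgroup.\<close>

lemma uminus_mem: "x \<in> Om r \<Longrightarrow> - x \<in> Om r"
proof -
  have sc_add: "sc (a + b) x = sc a x + sc b x" for a b x
    using graded unfolding graded_algebra_def complex_algebra_sc_def by simp
  have sc_one: "sc 1 x = x" for x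
    using graded unfolding graded_algebra_def complex_algebra_sc_def by simp
  have "sc 0 x = 0"
    using sc_add[of 0 0 x] by simp
  then have "sc (-1) x = - x"
    using sc_add[of "-1" 1 x] sc_one[of x] by (simp add: eq_neg_iff_add_eq_0)
  then show "x \<in> Om r \<Longrightarrow> - x \<in> Om r"
    using scale_mem by metis
qed

lemma diff_mem: "x \<in> Om r \<Longrightarrow> y \<in> Om r \<Longrightarrow> x - y \<in> Om r"
  using add_mem[of x r "- y"] uminus_mem[of y r] by simp

lemma sum_mem: "(\<And>i. i \<in> I \<Longrightarrow> f i \<in> Om r) \<Longrightarrow> sum f I \<in> Om r"
  by (induction I rule: infinite_finite_induct) (auto simp: zero_mem add_mem)

lemma mat_over_zero: "0\<^sub>m n m \<in> mat_over (Om r) n m"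
  by (simp add: mat_over_def zero_mem)

lemma mat_over_one: "1\<^sub>m n \<in> mat_over (Om 0) n n"
  by (simp add: mat_over_def zero_mem one_mem)

lemma mat_over_add:
  "A \<in> mat_over (Om r) n m \<Longrightarrow> B \<in> mat_over (Om r) n m \<Longrightarrow> A + B \<in> mat_over (Om r) n m"
  by (auto simp: mat_over_def add_mem)

lemma mat_over_diff:
  "A \<in> mat_over (Om r) n m \<Longrightarrow> B \<in> mat_over (Om r) n m \<Longrightarrow> A - B \<in> mat_over (Om r) n m"
  by (auto simp: mat_over_def diff_mem)

lemma mat_over_mult:
  "A \<in> mat_over (Om r) n m \<Longrightarrow> B \<in> mat_over (Om s) m k \<Longrightarrow> A * B \<in> mat_over (Om (r + s)) n k"
  by (auto simp: mat_over_def scalar_prod_def intro!: sum_mem mult_mem)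

end

lemma conjugate_affine:
  fixes X Y K G H L P B :: "'a::ring_1 mat"
  assumes X: "X \<in> carrier_mat N N" and Y: "Y \<in> carrier_mat M N" and K: "K \<in> carrier_mat N M"
    and G: "G \<in> carrier_mat N N" and H: "H \<in> carrier_mat N M" and L: "L \<in> carrier_mat M M"
    and P: "P \<in> carrier_mat N N" and B: "B \<in> carrier_mat N N"
    and ZB: "(X - K * Y) * B = 1\<^sub>m N" and LY: "L * Y = Y * P" and XP: "X * P = G * X + H * Y"
  shows "(X - K * Y) * (P * B) = G + (G * K + H - K * L) * (Y * B)"
proof -
  define Phi where "Phi = Y * B"
  have Phi: "Phi \<in> carrier_mat M N"
    using Y B by (simp add: Phi_def)
  have "X * B - K * Phi = 1\<^sub>m N"
    using ZB X Y K B by (simp add: Phi_def minus_mult_distrib_mat[of _ N N])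
  then have XB: "X * B = 1\<^sub>m N + K * Phi"
  proof (intro eq_matI)
    fix i j assume "i < dim_row (1\<^sub>m N + K * Phi)" and "j < dim_col (1\<^sub>m N + K * Phi)"
    moreover assume "X * B - K * Phi = 1\<^sub>m N"
    ultimately show "(X * B) $$ (i, j) = (1\<^sub>m N + K * Phi) $$ (i, j)"
      using X B K Phi by (auto dest!: arg_cong[where f = "\<lambda>A. A $$ (i, j)"] simp: algebra_simps)
  qed (use X B K Phi in auto)
  have ZP: "(X - K * Y) * P = X * P - K * (Y * P)"
    using X Y K P by (simp add: minus_mult_distrib_mat[of _ N N])
  have "(X - K * Y) * (P * B) = ((X - K * Y) * P) * B"
    using X Y K P B by (intro assoc_mult_mat[symmetric]) auto
  also have "\<dots> = (X * P - K * (Y * P)) * B"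
    by (simp only: ZP)
  also have "\<dots> = (G * X + H * Y - K * (L * Y)) * B"
    by (simp add: XP LY)
  also have "\<dots> = G * (X * B) + H * Phi - K * (L * Phi)"
    using X Y K G H L B
    by (simp add: Phi_def minus_mult_distrib_mat[of _ N N] add_mult_distrib_mat[of _ N N]
        assoc_mult_mat[of K N M "L * Y" N B N])
  also have "\<dots> = G + (G * K + H - K * L) * Phi"
    using K G H L Phi
    by (simp add: XB mult_add_distrib_mat[of G N N "1\<^sub>m N" N "K * Phi"] minus_mult_distrib_mat[of _ N M]
        add_mult_distrib_mat[of _ N M]) (intro eq_matI, auto simp: algebra_simps)
  finally show ?thesis
    by (simp add: Phi_def)
qed

locale bidiff_alg =
  fixes sc :: "complex \<Rightarrow> 'w::ring_1 \<Rightarrow> 'w" and Om :: "nat \<Rightarrow> 'w set" and d db :: "'w \<Rightarrow> 'w"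
  assumes bidiff: "bidiff_graded_algebra sc Om d db"

sublocale bidiff_alg \<subseteq> graded_alg sc Om
  using bidiff by unfold_locales (simp add: bidiff_graded_algebra_def)

sublocale bidiff_alg \<subseteq> d: graded_leibniz Om d
  using bidiff by unfold_locales (auto simp: bidiff_graded_algebra_def graded_derivation_def)

sublocale bidiff_alg \<subseteq> db: graded_leibniz Om db
  using bidiff by unfold_locales (auto simp: bidiff_graded_algebra_def graded_derivation_def)

context bidiff_alg
begin

lemma mat_d_nilpotent: "map_mat d (map_mat d A) = 0\<^sub>m (dim_row A) (dim_col A)"
  using bidiff by (intro eq_matI) (auto simp: bidiff_graded_algebra_def)

lemma mat_anticommute: "map_mat db (map_mat d A) = - map_mat d (map_mat db A)"
proof -
  have "db (d x) = - d (db x)" for x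
    using bidiff minus_unique[of "d (db x)" "db (d x)"] by (simp add: bidiff_graded_algebra_def)
  then show ?thesis
    by (intro eq_matI) auto
qed

lemma flow_diff_const:
  assumes X: "X \<in> carrier_mat l n" and Y: "Y \<in> carrier_mat m n" and P: "P \<in> carrier_mat n n"
    and K: "K \<in> mat_over (Om 0) l m" and dK: "map_mat d K = 0\<^sub>m l m" and dbK: "map_mat db K = 0\<^sub>m l m"
    and flowX: "map_mat db X = map_mat d X * P" and flowY: "map_mat db Y = map_mat d Y * P"
  shows "map_mat db (X - K * Y) = map_mat d (X - K * Y) * P"
proof -
  have Kc: "K \<in> carrier_mat l m"
    using K by (simp add: mat_over_def)
  have "map_mat db (X - K * Y) = map_mat d X * P - K * (map_mat d Y * P)"
    using X Y Kc by (simp add: db.mat_d_diff[of _ l n] db.mat_d_const_left[OF K dbK Y] flowX flowY)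
  also have "\<dots> = (map_mat d X - K * map_mat d Y) * P"
    using X Y Kc P by (simp add: minus_mult_distrib_mat[of _ l n])
  also have "\<dots> = map_mat d (X - K * Y) * P"
    using X Y Kc by (simp add: d.mat_d_diff[of _ l n] d.mat_d_const_left[OF K dK Y])
  finally show ?thesis .
qed

lemma quotient_flow:
  assumes Z: "Z \<in> mat_over (Om 0) n n" and B: "B \<in> carrier_mat n n"
    and ZB: "Z * B = 1\<^sub>m n" and BZ: "B * Z = 1\<^sub>m n"
    and Y: "Y \<in> mat_over (Om 0) m n" and P: "P \<in> carrier_mat n n"
    and flowY: "map_mat db Y = map_mat d Y * P" and flowZ: "map_mat db Z = map_mat d Z * P"
  shows "map_mat db (Y * B) = map_mat d (Y * B) * (Z * (P * B))"
proof -
  have Zc: "Z \<in> carrier_mat n n" and Yc: "Y \<in> carrier_mat m n"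
    using Z Y by (auto simp: mat_over_def)
  define W where "W = map_mat d Y - (Y * B) * map_mat d Z"
  have Wc: "W \<in> carrier_mat m n"
    using Yc B Zc by (simp add: W_def minus_carrier_mat)
  have dPhi: "map_mat d (Y * B) = W * B"
    unfolding W_def by (rule d.mat_d_right_quotient[OF one_mem Z B ZB BZ Y])
  have assoc: "(Y * B) * (map_mat d Z * P) = (Y * B * map_mat d Z) * P"
    using Yc B Zc P by (intro assoc_mult_mat[symmetric]) auto
  have W_P: "map_mat d Y * P - (Y * B * map_mat d Z) * P = W * P"
    unfolding W_def using Yc B Zc by (intro minus_mult_distrib_mat[symmetric, OF _ _ P]) auto
  have "map_mat db (Y * B) = (map_mat d Y * P - (Y * B) * (map_mat d Z * P)) * B"
    using db.mat_d_right_quotient[OF one_mem Z B ZB BZ Y] by (simp add: flowY flowZ)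
  also have "\<dots> = W * P * B"
    by (simp only: assoc W_P)
  also have "\<dots> = W * ((B * Z) * (P * B))"
    using Wc B P by (simp add: BZ)
  also have "\<dots> = W * B * (Z * (P * B))"
    using Wc B Zc P by (simp add: assoc_mult_mat[of W m n B n "Z * (P * B)" n]
        assoc_mult_mat[of B n n Z n "P * B" n])
  also have "\<dots> = map_mat d (Y * B) * (Z * (P * B))"
    by (simp add: dPhi)
  finally show ?thesis .
qed

lemma curvature_from_flow:
  assumes Phi: "Phi \<in> mat_over (Om 0) m n" and C: "C \<in> carrier_mat n n"
    and flow: "map_mat db Phi = map_mat d Phi * C"
  shows "map_mat db (map_mat d Phi) = map_mat d Phi * map_mat d C"
proof -
  have Phic: "Phi \<in> carrier_mat m n"
    using Phi by (simp add: mat_over_def)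
  have dPhi: "map_mat d Phi \<in> mat_over (Om 1) m n"
    using d.mat_d_degree[OF Phi] by simp
  have "map_mat db (map_mat d Phi) = - map_mat d (map_mat d Phi * C)"
    by (simp add: mat_anticommute flow)
  also have "\<dots> = - (map_mat d (map_mat d Phi) * C - map_mat d Phi * map_mat d C)"
    by (simp add: d.mat_leibniz1[OF dPhi C])
  also have "\<dots> = map_mat d Phi * map_mat d C"
    using Phic C by (intro eq_matI) (auto simp: mat_d_nilpotent)
  finally show ?thesis .
qed

theorem quotient_equation:
  assumes P: "P \<in> carrier_mat N N"
    and K: "K \<in> mat_over (Om 0) N M" and dK: "map_mat d K = 0\<^sub>m N M" and dbK: "map_mat db K = 0\<^sub>m N M"
    and X: "X \<in> mat_over (Om 0) N N" and Y: "Y \<in> mat_over (Om 0) M N"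
    and flowX: "map_mat db X = map_mat d X * P" and flowY: "map_mat db Y = map_mat d Y * P"
    and B: "B \<in> mat_over (Om 0) N N"
    and ZB: "(X - K * Y) * B = 1\<^sub>m N" and BZ: "B * (X - K * Y) = 1\<^sub>m N"
    and G: "G \<in> mat_over (Om 0) N N" and dG: "map_mat d G = 0\<^sub>m N N"
    and H: "H \<in> mat_over (Om 0) N M" and dH: "map_mat d H = 0\<^sub>m N M"
    and L: "L \<in> mat_over (Om 0) M M" and dL: "map_mat d L = 0\<^sub>m M M"
    and LY: "L * Y = Y * P" and XP: "X * P = G * X + H * Y"
  shows "map_mat db (map_mat d (Y * B)) = map_mat d (Y * B) * (G * K + H - K * L) * map_mat d (Y * B)"
proof -
  define Z where "Z = X - K * Y"
  define Phi where "Phi = Y * B"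
  define Q where "Q = G * K + H - K * L"
  have Xc: "X \<in> carrier_mat N N" and Yc: "Y \<in> carrier_mat M N" and Kc: "K \<in> carrier_mat N M"
    and Bc: "B \<in> carrier_mat N N" and Gc: "G \<in> carrier_mat N N" and Hc: "H \<in> carrier_mat N M"
    and Lc: "L \<in> carrier_mat M M"
    using X Y K B G H L by (auto simp: mat_over_def)
  have Z: "Z \<in> mat_over (Om 0) N N"
    using mat_over_diff[OF X mat_over_mult[OF K Y, simplified]] by (simp add: Z_def)
  have Phi: "Phi \<in> mat_over (Om 0) M N"
    using mat_over_mult[OF Y B] by (simp add: Phi_def)
  have Q: "Q \<in> mat_over (Om 0) N M"
    using mat_over_diff[OF mat_over_add[OF mat_over_mult[OF G K, simplified] H]
        mat_over_mult[OF K L, simplified]]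
    by (simp add: Q_def)
  have dQ: "map_mat d Q = 0\<^sub>m N M"
    using Gc Kc Hc Lc
    by (simp add: Q_def d.mat_d_diff[of _ N M] d.mat_d_add[of _ N M] dH
        d.mat_d_const_left[OF G dG Kc] d.mat_d_const_left[OF K dK Lc] dK dL)
  have flowZ: "map_mat db Z = map_mat d Z * P"
    unfolding Z_def by (rule flow_diff_const[OF Xc Yc P K dK dbK flowX flowY])
  have flowPhi: "map_mat db Phi = map_mat d Phi * (Z * (P * B))"
    unfolding Phi_def
    by (rule quotient_flow[OF Z Bc ZB[folded Z_def] BZ[folded Z_def] Y P flowY flowZ])
  have "Z * (P * B) = G + Q * Phi"
    unfolding Z_def Q_def Phi_def by (rule conjugate_affine[OF Xc Yc Kc Gc Hc Lc P Bc ZB LY XP])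
  moreover have Qc: "Q \<in> carrier_mat N M" and Phic: "Phi \<in> carrier_mat M N"
    using Q Phi by (auto simp: mat_over_def)
  ultimately have dC: "map_mat d (Z * (P * B)) = Q * map_mat d Phi"
    using Gc by (simp add: d.mat_d_add[of G N N] dG d.mat_d_const_left[OF Q dQ Phic])
  have C: "Z * (P * B) \<in> carrier_mat N N"
    using Z P Bc by (auto simp: mat_over_def)
  have "map_mat db (map_mat d Phi) = map_mat d Phi * (Q * map_mat d Phi)"
    using curvature_from_flow[OF Phi C flowPhi] by (simp only: dC)
  also have "\<dots> = map_mat d Phi * Q * map_mat d Phi"
    using Phic Qc by (intro assoc_mult_mat[symmetric]) auto
  finally show ?thesis
    by (simp only: Phi_def Q_def)
qed

end

theorem corollary1:
  fixes sc :: "complex \<Rightarrow> 'w::ring_1 \<Rightarrow> 'w"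
    and Om :: "nat \<Rightarrow> 'w set" and d db :: "'w \<Rightarrow> 'w"
    and M N :: nat and P K X' Y' :: "'w mat"
  assumes bdga: "bidiff_graded_algebra sc Om d db"
    and MN: "M \<ge> 1" "N \<ge> 1"
    and P: "P \<in> mat_over (Om 0) N N"
    and K: "K \<in> mat_over (Om 0) N M"
    and dK: "map_mat d K = 0\<^sub>m N M" and dbK: "map_mat db K = 0\<^sub>m N M"
    and X': "X' \<in> mat_over (Om 0) N N"
    and Y': "Y' \<in> mat_over (Om 0) M N"
    and eqX: "map_mat db X' = map_mat d X' * P"
    and eqY: "map_mat db Y' = map_mat d Y' * P"
  shows
   "(\<forall>R L B. R \<in> mat_over (Om 0) N N \<longrightarrow> L \<in> mat_over (Om 0) M M \<longrightarrow>
        map_mat d R = 0\<^sub>m N N \<longrightarrow> map_mat d L = 0\<^sub>m M M \<longrightarrow>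
        L * Y' = Y' * P \<longrightarrow> R * X' = X' * P \<longrightarrow>
        B \<in> mat_over (Om 0) N N \<longrightarrow>
        (X' - K * Y') * B = 1\<^sub>m N \<longrightarrow> B * (X' - K * Y') = 1\<^sub>m N \<longrightarrow>
        (let Phi = Y' * B; Q = R * K - K * L in
           map_mat db (map_mat d Phi) = map_mat d Phi * Q * map_mat d Phi))
    \<and>
    (M = N \<longrightarrow>
     (\<forall>L B. L \<in> mat_over (Om 0) N N \<longrightarrow> map_mat d L = 0\<^sub>m N N \<longrightarrow>
        L * Y' = Y' * P \<longrightarrow> L * X' + Y' = X' * P \<longrightarrow>
        B \<in> mat_over (Om 0) N N \<longrightarrow>
        (X' - K * Y') * B = 1\<^sub>m N \<longrightarrow> B * (X' - K * Y') = 1\<^sub>m N \<longrightarrow>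
        (let Phi = Y' * B; Q = 1\<^sub>m N + (L * K - K * L) in
           map_mat db (map_mat d Phi) = map_mat d Phi * Q * map_mat d Phi)))"
proof -
  interpret bidiff_alg sc Om d db
    using bdga by unfold_locales
  have Pc: "P \<in> carrier_mat N N" and Kc: "K \<in> carrier_mat N M"
    and X'c: "X' \<in> carrier_mat N N" and Y'c: "Y' \<in> carrier_mat M N"
    using P K X' Y' by (auto simp: mat_over_def)
  note general = quotient_equation[OF Pc K dK dbK X' Y' eqX eqY]
  show ?thesis
  proof (intro conjI allI impI)
    fix R L B
    assume R: "R \<in> mat_over (Om 0) N N" and L: "L \<in> mat_over (Om 0) M M"
      and dR: "map_mat d R = 0\<^sub>m N N" and dL: "map_mat d L = 0\<^sub>m M M"
      and LY: "L * Y' = Y' * P" and RX: "R * X' = X' * P"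
      and B: "B \<in> mat_over (Om 0) N N"
      and ZB: "(X' - K * Y') * B = 1\<^sub>m N" and BZ: "B * (X' - K * Y') = 1\<^sub>m N"
    have XP: "X' * P = R * X' + 0\<^sub>m N M * Y'"
      using RX R X'c Y'c Pc by (simp add: mat_over_def)
    have "R * K + 0\<^sub>m N M - K * L = R * K - K * L"
      using R Kc L by (auto simp: mat_over_def)
    then show "let Phi = Y' * B; Q = R * K - K * L
               in map_mat db (map_mat d Phi) = map_mat d Phi * Q * map_mat d Phi"
      using general[OF B ZB BZ R dR mat_over_zero d.mat_d_zero L dL LY XP] by (simp add: Let_def)
  next
    fix L B
    assume MN: "M = N" and L: "L \<in> mat_over (Om 0) N N" and dL: "map_mat d L = 0\<^sub>m N N"
      and LY: "L * Y' = Y' * P" and LX: "L * X' + Y' = X' * P"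
      and B: "B \<in> mat_over (Om 0) N N"
      and ZB: "(X' - K * Y') * B = 1\<^sub>m N" and BZ: "B * (X' - K * Y') = 1\<^sub>m N"
    have XP: "X' * P = L * X' + 1\<^sub>m N * Y'"
      using LX Y'c MN by simp
    have "L * K + 1\<^sub>m N - K * L = 1\<^sub>m N + (L * K - K * L)"
      using L Kc MN by (intro eq_matI) (auto simp: mat_over_def algebra_simps)
    then show "let Phi = Y' * B; Q = 1\<^sub>m N + (L * K - K * L)
               in map_mat db (map_mat d Phi) = map_mat d Phi * Q * map_mat d Phi"
      using general[OF B ZB BZ L dL, of "1\<^sub>m N" L] mat_over_one d.mat_d_one[OF one_mem] L dL LY XP MN
      by (simp add: Let_def)
  qed
qed

end
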